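(* Let $m\ge 2$ and suppose $B,D\subseteq\mathbb{Z}_m$ are $2$-$\{m;k_1,k_2;\mu\}$ SDS. (i) If, for some $b\in B$, the sets $B\setminus\{b\}$ and $D$ are $2$-$\{m;k_1-1,k_2;\mu-1;\frac{m-1}{2}\}$ ASDS, then $k_1=\frac{m+3}{4}$ and $\mu=\frac{m+3}{16}+\frac{k_2^2-k_2}{m-1}$. (ii) If, for some $b\in\mathbb{Z}_m\setminus(B\cup D)$, the sets $B\cup\{b\}$ and $D$ are $2$-$\{m;k_1+1,k_2;\mu;\frac{m-1}{2}\}$ ASDS, then $k_1=\frac{m-1}{4}$ and $\mu=\frac{m-5}{16}+\frac{k_2^2-k_2}{m-1}$.
   Context: For $B,D\subseteq\mathbb{Z}_m$ and $a\in\mathbb{Z}_m\setminus\{0\}$, let $N_{B,D}(a)=|\{(x,x')\in B\times B: x-x'\equiv a\}|+|\{(y,y')\in D\times D: y-y'\equiv a\}|$ (the total number of solutions of the congruences $x_i-x_j\equiv a$, $y_{i'}-y_{j'}\equiv a \pmod m$ with elements of $B$, resp. $D$). For integers $\mu$ and $0\le t\le m-1$, $B$ and $D$ are $2$-$\{m;k_1,k_2;\mu;t\}$ ASDS (almost supplementary difference sets) if $|B|=k_1$, $|D|=k_2$, $N_{B,D}(a)=\mu$ for exactly $t$ values $a\ne0$, and $N_{B,D}(a)=\mu+1$ for the remaining $m-1-t$ values $a\ne0$. They are $2$-$\{m;k_1,k_2;\mu\}$ SDS (supplementary difference sets) if $|B|=k_1$, $|D|=k_2$ and $N_{B,D}(a)=\mu$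 for all $a\ne 0$. *)

theory Defs
  imports Complex_Main
begin

text \<open>Z_m is represented by the integers {0..<m}; congruences are taken mod m.\<close>

definition Nsol :: "nat \<Rightarrow> int set \<Rightarrow> int set \<Rightarrow> int \<Rightarrow> nat" where
  "Nsol m B D a =
     card {(x, x'). x \<in> B \<and> x' \<in> B \<and> (x - x') mod int m = a mod int m}
   + card {(y, y'). y \<in> D \<and> y' \<in> D \<and> (y - y') mod int m = a mod int m}"

definition SDS :: "nat \<Rightarrow> nat \<Rightarrow> nat \<Rightarrow> int \<Rightarrow> int set \<Rightarrow> int set \<Rightarrow> bool" where
  "SDS m k1 k2 mu B D \<longleftrightarrow>
     B \<subseteq> {0..<int m} \<and> D \<subseteq> {0..<int m} \<and> card B = k1 \<and> card D = k2 \<and>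
     (\<forall>a \<in> {1..<int m}. int (Nsol m B D a) = mu)"

text \<open>The parameter t is
  taken as a real number so that values like (m-1)/2 can be passed literally; the
  condition forces t to be an integer with 0 <= t <= m-1.\<close>
definition ASDS :: "nat \<Rightarrow> nat \<Rightarrow> nat \<Rightarrow> int \<Rightarrow> real \<Rightarrow> int set \<Rightarrow> int set \<Rightarrow> bool" where
  "ASDS m k1 k2 mu t B D \<longleftrightarrow>
     B \<subseteq> {0..<int m} \<and> D \<subseteq> {0..<int m} \<and> card B = k1 \<and> card D = k2 \<and>
     0 \<le> t \<and> t \<le> real m - 1 \<and>
     real (card {a \<in> {1..<int m}. int (Nsol m B D a) = mu}) = t \<and>
     (\<forall>a \<in> {1..<int m}. int (Nsol m B D a) = mu \<or> int (Nsol m B D a) = mu + 1)"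

end

theory Submission
  imports Defs
begin

text \<open>Adding a point b to a set S \<subseteq> Z_m creates exactly 2|S| new ordered pairs with nonzero
  difference, so the counts N(a) grow by 2|S| in total. In both situations of the theorem
  every N(a) changes by 0 or 1, and the ASDS condition says how many change: t = (m-1)/2
  in (i), m-1-t = (m-1)/2 in (ii). Hence 2(k1-1) = (m-1)/2, resp. 2 k1 = (m-1)/2, and \<mu>
  follows from the counting identity (m-1) \<mu> = k1(k1-1) + k2(k2-1) of the SDS.\<close>

definition diff_count :: "nat \<Rightarrow> int set \<Rightarrow> int \<Rightarrow> nat" where
  "diff_count m S a = card {(x, x'). x \<in> S \<and> x' \<in> S \<and> (x - x') mod int m = a mod int m}"

lemma Nsol_eq_diff_count: "Nsol m B D a = diff_count m B a + diff_count m D a"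
  unfolding Nsol_def diff_count_def by simp

lemma diff_mod_in_nonzero_residues:
  fixes x x' :: int
  assumes "x \<in> {0..<int m}" "x' \<in> {0..<int m}" "x \<noteq> x'"
  shows "(x - x') mod int m \<in> {1..<int m}"
proof (cases "x > x'")
  case True
  then have "(x - x') mod int m = x - x'" using assms by (intro mod_pos_pos_trivial) auto
  then show ?thesis using True assms by auto
next
  case False
  then have "(x - x') mod int m = x - x' + int m"
    using assms by (subst mod_add_self2[symmetric], intro mod_pos_pos_trivial) auto
  then show ?thesis using False assms by auto
qed

lemma sum_diff_count:
  assumes S: "S \<subseteq> {0..<int m}"
  shows "(\<Sum>a\<in>{1..<int m}. diff_count m S a) = card S * (card S - 1)"
proof -
  have fin_S: "finite S" using S finite_subset by blast
  define pairs where "pairs a = {(x, x'). x \<in> S \<and> x' \<in> S \<and> (x - x') mod int m = a}" for a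
  have count_eq: "diff_count m S a = card (pairs a)" if "a \<in> {1..<int m}" for a
    using that unfolding diff_count_def pairs_def by simp
  have off_diagonal: "(\<Union>a\<in>{1..<int m}. pairs a) = S \<times> S - (\<lambda>x. (x, x)) ` S"
  proof (intro set_eqI iffI)
    fix p assume "p \<in> (\<Union>a\<in>{1..<int m}. pairs a)"
    then obtain x x' where "p = (x, x')" "x \<in> S" "x' \<in> S" "(x - x') mod int m \<noteq> 0"
      unfolding pairs_def by auto
    then show "p \<in> S \<times> S - (\<lambda>x. (x, x)) ` S" by auto
  next
    fix p assume "p \<in> S \<times> S - (\<lambda>x. (x, x)) ` S"
    then obtain x x' where "p = (x, x')" "x \<in> S" "x' \<in> S" "x \<noteq> x'" by auto
    moreover have "(x - x') mod int m \<in> {1..<int m}"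
      using calculation S by (intro diff_mod_in_nonzero_residues) auto
    ultimately show "p \<in> (\<Union>a\<in>{1..<int m}. pairs a)" unfolding pairs_def by blast
  qed
  have "(\<Sum>a\<in>{1..<int m}. diff_count m S a) = (\<Sum>a\<in>{1..<int m}. card (pairs a))"
    using count_eq by simp
  also have "\<dots> = card (\<Union>a\<in>{1..<int m}. pairs a)"
    by (rule card_UN_disjoint[symmetric])
      (auto simp: pairs_def intro: finite_subset[of _ "S \<times> S"] fin_S)
  also have "\<dots> = card (S \<times> S) - card ((\<lambda>x. (x, x)) ` S)"
    unfolding off_diagonal by (rule card_Diff_subset) (use fin_S in auto)
  also have "card ((\<lambda>x. (x, x)) ` S) = card S" by (rule card_image) (auto simp: inj_on_def)
  finally show ?thesis by (simp add: card_cartesian_product diff_mult_distrib2)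
qed

lemma SDS_parameter_relation:
  assumes "m \<ge> 1" and sds: "SDS m k1 k2 mu B D"
  shows "(real m - 1) * mu = real k1 * (real k1 - 1) + real k2 * (real k2 - 1)"
proof -
  have "(int m - 1) * mu = (\<Sum>a\<in>{1..<int m}. int (Nsol m B D a))"
    using sds \<open>m \<ge> 1\<close> unfolding SDS_def by simp
  also have "\<dots> = int (\<Sum>a\<in>{1..<int m}. diff_count m B a) + int (\<Sum>a\<in>{1..<int m}. diff_count m D a)"
    by (simp add: Nsol_eq_diff_count sum.distrib)
  finally have "(int m - 1) * mu = int (k1 * (k1 - 1)) + int (k2 * (k2 - 1))"
    using sds sum_diff_count[of B m] sum_diff_count[of D m] unfolding SDS_def by simp
  then have "real_of_int ((int m - 1) * mu) = real (k1 * (k1 - 1)) + real (k2 * (k2 - 1))"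
    by (metis of_int_add of_int_of_nat_eq)
  then show ?thesis
    using \<open>m \<ge> 1\<close> by (cases k1; cases k2) (auto simp: algebra_simps of_nat_diff)
qed

lemma sum_Nsol_insert:
  assumes S: "S \<subseteq> {0..<int m}" and b: "b \<in> {0..<int m}" "b \<notin> S"
  shows "(\<Sum>a\<in>{1..<int m}. int (Nsol m (insert b S) D a) - int (Nsol m S D a)) = 2 * int (card S)"
proof -
  have "finite S" using S finite_subset by blast
  have "(\<Sum>a\<in>{1..<int m}. int (Nsol m (insert b S) D a) - int (Nsol m S D a))
      = int (\<Sum>a\<in>{1..<int m}. diff_count m (insert b S) a) - int (\<Sum>a\<in>{1..<int m}. diff_count m S a)"
    by (simp add: Nsol_eq_diff_count sum_subtractf)
  also have "\<dots> = int (card (insert b S) * (card (insert b S) - 1)) - int (card S * (card S - 1))"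
    using S b by (simp add: sum_diff_count)
  also have "\<dots> = 2 * int (card S)"
    using \<open>finite S\<close> b(2) by (cases "card S") (auto simp: algebra_simps)
  finally show ?thesis .
qed

lemma card_Nsol_increments:
  assumes S: "S \<subseteq> {0..<int m}" and b: "b \<in> {0..<int m}" "b \<notin> S"
    and steps: "\<And>a. a \<in> {1..<int m} \<Longrightarrow> Nsol m (insert b S) D a = Nsol m S D a
                   \<or> Nsol m (insert b S) D a = Nsol m S D a + 1"
  shows "card {a\<in>{1..<int m}. Nsol m (insert b S) D a = Nsol m S D a + 1} = 2 * card S"
proof -
  let ?up = "\<lambda>a. Nsol m (insert b S) D a = Nsol m S D a + 1"
  have "int (card {a\<in>{1..<int m}. ?up a}) = (\<Sum>a\<in>{1..<int m}. of_bool (?up a))"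
    by (simp add: Int_def)
  also have "\<dots> = (\<Sum>a\<in>{1..<int m}. int (Nsol m (insert b S) D a) - int (Nsol m S D a))"
    using steps by (intro sum.cong) auto
  finally show ?thesis using sum_Nsol_insert[OF S b] by simp
qed

lemma SDS_ASDS_remove_point:
  assumes sds: "SDS m k1 k2 mu B D" and bB: "b \<in> B"
    and asds: "ASDS m (k1 - 1) k2 (mu - 1) t (B - {b}) D"
  shows "t = 2 * (real k1 - 1)"
proof -
  let ?S = "B - {b}"
  have B: "B \<subseteq> {0..<int m}" and Nmu: "\<And>a. a \<in> {1..<int m} \<Longrightarrow> int (Nsol m B D a) = mu"
    using sds unfolding SDS_def by auto
  have "finite B" using B finite_subset by blast
  then have card_S: "card ?S = card B - 1" "card B \<ge> 1" "card B = k1"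
    using bB sds card_0_eq[of B] unfolding SDS_def by auto
  have ins: "insert b ?S = B" using bB by auto
  have t: "t = real (card {a\<in>{1..<int m}. int (Nsol m ?S D a) = mu - 1})"
    and drop: "\<And>a. a \<in> {1..<int m} \<Longrightarrow> int (Nsol m ?S D a) = mu - 1 \<or> int (Nsol m ?S D a) = mu"
    using asds unfolding ASDS_def by auto
  have steps: "Nsol m B D a = Nsol m ?S D a \<or> Nsol m B D a = Nsol m ?S D a + 1"
    if "a \<in> {1..<int m}" for a
    using drop[OF that] Nmu[OF that] by linarith
  have "{a\<in>{1..<int m}. Nsol m B D a = Nsol m ?S D a + 1}
      = {a\<in>{1..<int m}. int (Nsol m ?S D a) = mu - 1}"
    using Nmu by (intro Collect_cong conj_cong refl) fastforce
  moreover have "card {a\<in>{1..<int m}. Nsol m B D a = Nsol m ?S D a + 1} = 2 * card ?S"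
    using card_Nsol_increments[of ?S m b D, unfolded ins] B bB steps by blast
  ultimately show ?thesis using t card_S by (simp add: of_nat_diff)
qed

lemma SDS_ASDS_add_point:
  assumes sds: "SDS m k1 k2 mu B D" and b: "b \<in> {0..<int m} - B"
    and asds: "ASDS m (k1 + 1) k2 mu t (insert b B) D"
  shows "t = real m - 1 - 2 * real k1"
proof -
  have B: "B \<subseteq> {0..<int m}" and Nmu: "\<And>a. a \<in> {1..<int m} \<Longrightarrow> int (Nsol m B D a) = mu"
    and card_B: "card B = k1"
    using sds unfolding SDS_def by auto
  let ?stay = "{a\<in>{1..<int m}. int (Nsol m (insert b B) D a) = mu}"
  have t: "t = real (card ?stay)" and "t \<ge> 0" "t \<le> real m - 1"
    and rise: "\<And>a. a \<in> {1..<int m} \<Longrightarrow> int (Nsol m (insert b B) D a) = mu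
                 \<or> int (Nsol m (insert b B) D a) = mu + 1"
    using asds unfolding ASDS_def by auto
  have steps: "Nsol m (insert b B) D a = Nsol m B D a \<or> Nsol m (insert b B) D a = Nsol m B D a + 1"
    if "a \<in> {1..<int m}" for a
    using rise[OF that] Nmu[OF that] by linarith
  have up_iff: "Nsol m (insert b B) D a = Nsol m B D a + 1 \<longleftrightarrow> int (Nsol m (insert b B) D a) \<noteq> mu"
    if "a \<in> {1..<int m}" for a
    using rise[OF that] Nmu[OF that] by linarith
  have "{a\<in>{1..<int m}. Nsol m (insert b B) D a = Nsol m B D a + 1} = {1..<int m} - ?stay"
    using up_iff by auto
  moreover have "card {a\<in>{1..<int m}. Nsol m (insert b B) D a = Nsol m B D a + 1} = 2 * k1"
    using card_Nsol_increments[of B m b D] B b steps card_B by blast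
  moreover have stay: "?stay \<subseteq> {1..<int m}" by blast
  then have "finite ?stay" by (rule finite_subset) simp
  then have "real (card ({1..<int m} - ?stay)) = real (card {1..<int m}) - real (card ?stay)"
    using card_Diff_subset[OF _ stay] card_mono[OF _ stay] by (simp add: of_nat_diff)
  moreover have "real (card {1..<int m}) = real m - 1"
    using \<open>t \<ge> 0\<close> \<open>t \<le> real m - 1\<close> by (simp add: of_nat_diff)
  ultimately show ?thesis using t by simp
qed

theorem lemma3:
  fixes m k1 k2 :: nat and mu :: int and B D :: "int set"
  assumes m2: "m \<ge> 2"
    and sds: "SDS m k1 k2 mu B D"
  shows "(\<forall>b \<in> B. ASDS m (k1 - 1) k2 (mu - 1) ((real m - 1) / 2) (B - {b}) D \<longrightarrow>
            real k1 = (real m + 3) / 4 \<and>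
            real_of_int mu = (real m + 3) / 16 + (real k2 ^ 2 - real k2) / (real m - 1))
       \<and> (\<forall>b \<in> {0..<int m} - (B \<union> D). ASDS m (k1 + 1) k2 mu ((real m - 1) / 2) (B \<union> {b}) D \<longrightarrow>
            real k1 = (real m - 1) / 4 \<and>
            real_of_int mu = (real m - 5) / 16 + (real k2 ^ 2 - real k2) / (real m - 1))"
proof -
  have m1: "real m - 1 > 0" using m2 by simp
  have "(real m - 1) * mu = real k1 * (real k1 - 1) + real k2 * (real k2 - 1)"
    using SDS_parameter_relation[OF _ sds] m2 by simp
  then have "real_of_int mu = (real k1 * (real k1 - 1) + (real k2 ^ 2 - real k2)) / (real m - 1)"
    using m1 by (simp add: eq_divide_eq algebra_simps power2_eq_square)
  then have mu: "real_of_int mu = real k1 * (real k1 - 1) / (real m - 1) + (real k2 ^ 2 - real k2) / (real m - 1)"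
    by (simp add: add_divide_distrib)
  show ?thesis
  proof (intro conjI ballI impI)
    fix b assume "b \<in> B" "ASDS m (k1 - 1) k2 (mu - 1) ((real m - 1) / 2) (B - {b}) D"
    then have "(real m - 1) / 2 = 2 * (real k1 - 1)" by (rule SDS_ASDS_remove_point[OF sds])
    then show k1: "real k1 = (real m + 3) / 4" by simp
    have "real k1 * (real k1 - 1) = (real m + 3) / 16 * (real m - 1)"
      unfolding k1 by (simp add: field_simps)
    then show "real_of_int mu = (real m + 3) / 16 + (real k2 ^ 2 - real k2) / (real m - 1)"
      unfolding mu using m1 by simp
  next
    fix b assume "b \<in> {0..<int m} - (B \<union> D)" "ASDS m (k1 + 1) k2 mu ((real m - 1) / 2) (B \<union> {b}) D"
    then have "(real m - 1) / 2 = real m - 1 - 2 * real k1"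
      by (intro SDS_ASDS_add_point[OF sds]) (auto simp: insert_commute)
    then show k1: "real k1 = (real m - 1) / 4" by simp
    have "real k1 * (real k1 - 1) = (real m - 5) / 16 * (real m - 1)"
      unfolding k1 by (simp add: field_simps)
    then show "real_of_int mu = (real m - 5) / 16 + (real k2 ^ 2 - real k2) / (real m - 1)"
      unfolding mu using m1 by simp
  qed
qed

end
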